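(* Let $L$ be a layout. There exists a nested tuple morphism $f$ with $L_f=L$ if and only if $L$ is tractable.
   Context: A nested tuple (of positive integers) is a positive integer or a finite tuple of nested tuples; its flattening $X^\flat$ is the tuple of integer leaves left to right, $\mathrm{len}(X)$ its length and $\mathrm{entry}_i(X)$ its $i$-th entry. Congruent nested tuples share the same nesting pattern. A layout is $L=S:D$ with $S$ (positive entries) and $D$ (nonnegative entries) congruent nested tuples; $L^\flat=S^\flat:D^\flat$. $\langle n\rangle_*=\{*,1,\dots,n\}$. A nested tuple morphism $f:S\to T$ is given by a pointed map $\alpha:\langle\mathrm{len}(S)\rangle_*\to\langle\mathrm{len}(T)\rangle_*$ ($\alpha( * )=*$) such that each $j\ne*$ has at most one preimage and $\mathrm{entry}_i(S)=\mathrm{entry}_{\alpha(i)}(T)$ whenever $\alpha(i)\ne*$. With $T^\flat=(t_1,\dots,t_n)$, the encoded layout $L_f$ has shape $S$ and stride congruent to $S$ whose $i$-th flattened entry is $0$ if $\alpha(i)=*$ and $\prod_{j<\alpha(i)}t_j$ otherwise. Order pairs by $s:d\preceq s':d'$ iff $d<d'$ or ($d=d'$ and $s\le s'$); for a flat layout, $\mathrm{sort}$ stably reorders its modes into $\preceq$-nondecreasing order. A layout $L$ is tractable if, writing $\mathrm{sort}(L^\flat)=(s_1,\dots,s_m):(d_1,\dots,d_m)$, for each $1\le i<m$ either $d_i=0$ or $s_id_i$ divides $d_{i+1}$. *)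

theory Defs
  imports Main "HOL-Library.Product_Lexorder"
begin

datatype ntuple = Leaf nat | Node "ntuple list"

fun flat :: "ntuple \<Rightarrow> nat list" where
  "flat (Leaf n) = [n]"
| "flat (Node ts) = concat (map flat ts)"

definition len :: "ntuple \<Rightarrow> nat" where
  "len X = length (flat X)"

definition entry :: "nat \<Rightarrow> ntuple \<Rightarrow> nat" where
  "entry i X = flat X ! (i - 1)"

definition pos_tuple :: "ntuple \<Rightarrow> bool" where
  "pos_tuple X \<longleftrightarrow> (\<forall>x\<in>set (flat X). 0 < x)"

fun shape :: "ntuple \<Rightarrow> ntuple" where
  "shape (Leaf _) = Leaf 0"
| "shape (Node ts) = Node (map shape ts)"

definition congruent :: "ntuple \<Rightarrow> ntuple \<Rightarrow> bool" where
  "congruent X Y \<longleftrightarrow> shape X = shape Y"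

text \<open>A layout S:D is a pair (S, D); strides are naturals (nonnegative).\<close>
type_synonym layout = "ntuple \<times> ntuple"

definition is_layout :: "layout \<Rightarrow> bool" where
  "is_layout L \<longleftrightarrow> pos_tuple (fst L) \<and> congruent (fst L) (snd L)"

fun fill :: "ntuple \<Rightarrow> nat list \<Rightarrow> ntuple \<times> nat list"
and fill_list :: "ntuple list \<Rightarrow> nat list \<Rightarrow> ntuple list \<times> nat list" where
  "fill (Leaf _) ws = (Leaf (hd ws), tl ws)"
| "fill (Node ts) ws = (let (ts', r) = fill_list ts ws in (Node ts', r))"
| "fill_list [] ws = ([], ws)"
| "fill_list (t # ts) ws =
     (let (t', r) = fill t ws; (ts', r') = fill_list ts r in (t' # ts', r'))"

text \<open>Nested tuple morphism S \<rightarrow> T given by a pointed map alpha; the base point * is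
  represented by None, indices are 1-based.\<close>
definition is_morphism :: "ntuple \<Rightarrow> ntuple \<Rightarrow> (nat \<Rightarrow> nat option) \<Rightarrow> bool" where
  "is_morphism S T \<alpha> \<longleftrightarrow>
     (\<forall>i\<in>{1..len S}. \<forall>j. \<alpha> i = Some j \<longrightarrow> j \<in> {1..len T}) \<and>
     (\<forall>i\<in>{1..len S}. \<forall>i'\<in>{1..len S}. \<alpha> i \<noteq> None \<and> \<alpha> i = \<alpha> i' \<longrightarrow> i = i') \<and>
     (\<forall>i\<in>{1..len S}. \<forall>j. \<alpha> i = Some j \<longrightarrow> entry i S = entry j T)"

text \<open>The encoded layout L_f = S : D, D congruent to S with the prescribed flattening.\<close>
definition encoded_layout :: "ntuple \<Rightarrow> ntuple \<Rightarrow> (nat \<Rightarrow> nat option) \<Rightarrow> layout" where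
  "encoded_layout S T \<alpha> =
     (S, fst (fill S (map (\<lambda>i. case \<alpha> i of None \<Rightarrow> 0
                                        | Some j \<Rightarrow> prod_list (take (j - 1) (flat T)))
                         [1..<len S + 1])))"

text \<open>Sorting of a flat layout (list of modes (s,d)) by: (s,d) \<preceq> (s',d') iff d < d' or
  (d = d' and s \<le> s'); sort_key is stable.\<close>
definition sort_modes :: "(nat \<times> nat) list \<Rightarrow> (nat \<times> nat) list" where
  "sort_modes ms = sort_key (\<lambda>(s, d). (d, s)) ms"

definition tractable :: "layout \<Rightarrow> bool" where
  "tractable L \<longleftrightarrow>
     (let ms = sort_modes (zip (flat (fst L)) (flat (snd L)))
      in \<forall>i. i + 1 < length ms \<longrightarrow>
            snd (ms ! i) = 0 \<or> fst (ms ! i) * snd (ms ! i) dvd snd (ms ! (i + 1)))"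

end

theory Submission
  imports Defs "HOL-Combinatorics.List_Permutation"
begin

(* Position j of T (0-based) encodes the mode (t_j, t_0 ... t_(j-1)). For distinct positions
   a, b whose modes are ordered, s d of the first divides d of the second: if a < b this is a
   prefix product of T; if b < a the order forces all entries from b to a-1 to be 1, so both modes
   are (1, P) with the same prefix product P. Sorting the modes of L_f therefore gives a
   divisibility chain. Conversely, a sorted tractable flat layout (s_k : d_k) is realised by
   T = (d_1, s_1, d_2 / (s_1 d_1), s_2, ...), sending mode k to the entry s_k; the zero-stride
   modes, which sort first, contribute dummy entries (1, 1) and are sent to *. *)

lemma fill_flat_take_drop:
  "len X \<le> length ws \<Longrightarrow>
     flat (fst (fill X ws)) = take (len X) ws \<and> snd (fill X ws) = drop (len X) ws"
  "length (concat (map flat ts)) \<le> length ws \<Longrightarrow>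
     concat (map flat (fst (fill_list ts ws))) = take (length (concat (map flat ts))) ws \<and>
     snd (fill_list ts ws) = drop (length (concat (map flat ts))) ws"
proof (induction X ws and ts ws rule: fill_fill_list.induct)
  case (1 x ws)
  then show ?case by (cases ws) (auto simp: len_def)
next
  case (4 t ts ws)
  then show ?case
    by (auto simp: len_def take_add add.commute split: prod.splits)
qed (auto simp: len_def split: prod.splits)

lemma fill_flat_append:
  "ws = flat Y @ r \<Longrightarrow> shape X = shape Y \<Longrightarrow> fill X ws = (Y, r)"
  "ws = concat (map flat us) @ r \<Longrightarrow> map shape ts = map shape us \<Longrightarrow> fill_list ts ws = (us, r)"
proof (induction X ws and ts ws arbitrary: Y r and us r rule: fill_fill_list.induct)
  case (1 x ws)
  then show ?case by (cases Y) auto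
next
  case (2 ts ws)
  then show ?case by (cases Y) auto
next
  case (3 ws)
  then show ?case by auto
next
  case (4 t ts ws)
  then obtain u us' where "us = u # us'" by (cases us) auto
  with 4 show ?case by auto
qed

definition encoded_strides :: "nat list \<Rightarrow> (nat \<Rightarrow> nat option) \<Rightarrow> nat \<Rightarrow> nat list" where
  "encoded_strides ts \<alpha> n =
     map (\<lambda>i. case \<alpha> i of None \<Rightarrow> 0 | Some j \<Rightarrow> prod_list (take (j - 1) ts)) [1..<n + 1]"

lemma length_encoded_strides [simp]: "length (encoded_strides ts \<alpha> n) = n"
  by (simp add: encoded_strides_def)

lemma nth_encoded_strides [simp]:
  "p < n \<Longrightarrow> encoded_strides ts \<alpha> n ! p =
     (case \<alpha> (Suc p) of None \<Rightarrow> 0 | Some j \<Rightarrow> prod_list (take (j - 1) ts))"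
  by (simp add: encoded_strides_def del: upt_Suc)

lemma encoded_layout_conv_fill:
  "encoded_layout S T \<alpha> = (S, fst (fill S (encoded_strides (flat T) \<alpha> (len S))))"
  by (simp add: encoded_layout_def encoded_strides_def)

lemma flat_snd_encoded_layout:
  "flat (snd (encoded_layout S T \<alpha>)) = encoded_strides (flat T) \<alpha> (len S)"
  using fill_flat_take_drop(1)[of S "encoded_strides (flat T) \<alpha> (len S)"]
  by (simp add: encoded_layout_conv_fill)

lemma encoded_layout_eqI:
  assumes "congruent S D" and "flat D = encoded_strides (flat T) \<alpha> (len S)"
  shows "encoded_layout S T \<alpha> = (S, D)"
  using fill_flat_append(1)[of "flat D" D "[]" S] assms
  by (simp add: encoded_layout_conv_fill congruent_def)

definition mode_divides :: "nat \<times> nat \<Rightarrow> nat \<times> nat \<Rightarrow> bool" where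
  "mode_divides m m' \<longleftrightarrow> snd m = 0 \<or> fst m * snd m dvd snd m'"

lemma tractable_iff_successively:
  "tractable L \<longleftrightarrow>
     successively mode_divides (sort_key prod.swap (zip (flat (fst L)) (flat (snd L))))"
proof -
  have "sort_modes ms = sort_key prod.swap ms" for ms
    unfolding sort_modes_def by (metis case_prod_unfold prod.swap_def)
  then show ?thesis
    by (simp add: tractable_def Let_def successively_conv_nth mode_divides_def)
qed

lemma successively_sort_key:
  fixes f :: "'a \<Rightarrow> 'b::linorder"
  assumes "\<And>p q. p < length xs \<Longrightarrow> q < length xs \<Longrightarrow> p \<noteq> q \<Longrightarrow>
             f (xs ! p) \<le> f (xs ! q) \<Longrightarrow> R (xs ! p) (xs ! q)"
  shows "successively R (sort_key f xs)"
proof -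
  let ?ys = "sort_key f xs"
  obtain g where g: "bij_betw g {..<length ?ys} {..<length xs}"
    "\<And>i. i < length ?ys \<Longrightarrow> ?ys ! i = xs ! g i"
    using permutation_Ex_bij[of ?ys xs] by auto
  show ?thesis
    unfolding successively_conv_nth
  proof (intro allI impI)
    fix i assume i: "Suc i < length ?ys"
    have "f (?ys ! i) \<le> f (?ys ! Suc i)"
      using sorted_sort_key[of f xs] i by (simp add: sorted_iff_nth_mono)
    moreover have "g i \<noteq> g (Suc i)"
      using g(1) i unfolding bij_betw_def inj_on_def by (metis lessThan_iff Suc_lessD n_not_Suc_n)
    moreover have "g i < length xs" "g (Suc i) < length xs"
      using g(1) i by (auto simp: bij_betw_def)
    ultimately show "R (?ys ! i) (?ys ! Suc i)"
      using assms g(2) i by (metis Suc_lessD)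
  qed
qed

definition prefix_mode :: "nat list \<Rightarrow> nat \<Rightarrow> nat \<times> nat" where
  "prefix_mode ts j = (ts ! j, prod_list (take j ts))"

lemma prefix_prod_dvd: "a \<le> b \<Longrightarrow> prod_list (take a ts) dvd (prod_list (take b ts) :: nat)"
  by (metis le_add_diff_inverse take_add prod_list.append dvd_triv_left)

lemma prefix_mode_divides:
  assumes pos: "\<forall>t\<in>set ts. 0 < t" and "a < length ts" "b < length ts" "a \<noteq> b"
    and le: "prod.swap (prefix_mode ts a) \<le> prod.swap (prefix_mode ts b)"
  shows "mode_divides (prefix_mode ts a) (prefix_mode ts b)"
proof (cases "a < b")
  case True
  then show ?thesis using prefix_prod_dvd[of "Suc a" b ts] \<open>a < length ts\<close>
    by (simp add: mode_divides_def prefix_mode_def take_Suc_conv_app_nth mult.commute)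
next
  case False
  with \<open>a \<noteq> b\<close> have "b < a" by simp
  let ?P = "\<lambda>j. prod_list (take j ts)"
  have "take a ts = take (Suc b) ts @ take (a - Suc b) (drop (Suc b) ts)"
    using \<open>b < a\<close> by (metis take_add le_add_diff_inverse Suc_leI)
  then have Pa: "?P a = ?P b * ts ! b * prod_list (take (a - Suc b) (drop (Suc b) ts))"
    using \<open>b < a\<close> \<open>a < length ts\<close> by (simp add: take_Suc_conv_app_nth)
  have "0 < prod_list xs" if "set xs \<subseteq> set ts" for xs
    using that pos by (metis gr0I prod_list_zero_iff subsetD less_irrefl)
  then have "0 < ?P b" "0 < prod_list (take (a - Suc b) (drop (Suc b) ts))"
    by (meson set_take_subset set_drop_subset subset_trans)+
  moreover have "0 < ts ! b"
    using pos \<open>b < a\<close> \<open>a < length ts\<close> by simp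
  moreover have "?P a \<le> ?P b"
    using le by (auto simp: prefix_mode_def)
  ultimately have "ts ! b = 1" and "?P a = ?P b"
    using Pa by (auto simp: le_Suc_eq)
  then show ?thesis
    using le pos nth_mem[OF \<open>a < length ts\<close>]
    by (fastforce simp: mode_divides_def prefix_mode_def le_Suc_eq)
qed

lemma is_morphismD:
  assumes "is_morphism S T \<alpha>" and "1 \<le> i" "i \<le> len S"
  shows "\<alpha> i = Some j \<Longrightarrow> 1 \<le> j \<and> j \<le> len T"
    and "\<alpha> i = Some j \<Longrightarrow> entry i S = entry j T"
    and "\<alpha> i \<noteq> None \<Longrightarrow> \<alpha> i = \<alpha> i' \<Longrightarrow> 1 \<le> i' \<Longrightarrow> i' \<le> len S \<Longrightarrow> i = i'"
  using assms unfolding is_morphism_def by (meson atLeastAtMost_iff)+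

lemma tractable_encoded_layout:
  assumes T: "pos_tuple T" and f: "is_morphism S T \<alpha>"
  shows "tractable (encoded_layout S T \<alpha>)"
proof -
  let ?ts = "flat T"
  let ?z = "zip (flat S) (encoded_strides ?ts \<alpha> (len S))"
  have len_z: "length ?z = len S"
    by (simp add: len_def)
  have unmapped: "snd (?z ! p) = 0" if "p < len S" "\<alpha> (Suc p) = None" for p
    using that by (simp add: len_def)
  have mapped: "?z ! p = prefix_mode ?ts (j - 1) \<and> j - 1 < length ?ts"
    if "p < len S" "\<alpha> (Suc p) = Some j" for p j
  proof -
    have "1 \<le> j \<and> j \<le> len T" "entry (Suc p) S = entry j T"
      using is_morphismD(1,2)[OF f, of "Suc p" j] that by auto
    then show ?thesis
      using that by (auto simp: prefix_mode_def entry_def len_def)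
  qed
  have "mode_divides (?z ! p) (?z ! q)"
    if pq: "p < length ?z" "q < length ?z" "p \<noteq> q"
      and le: "prod.swap (?z ! p) \<le> prod.swap (?z ! q)" for p q
  proof (cases "\<alpha> (Suc p)")
    case None
    then show ?thesis using unmapped pq len_z by (simp add: mode_divides_def)
  next
    case (Some a)
    show ?thesis
    proof (cases "\<alpha> (Suc q)")
      case None
      then have "snd (?z ! p) = 0"
        using unmapped[of q] pq le len_z by (cases "?z ! p") auto
      then show ?thesis by (simp add: mode_divides_def)
    next
      case (Some b)
      have "a \<noteq> b"
        using is_morphismD(3)[OF f, of "Suc p" "Suc q"] pq len_z \<open>\<alpha> (Suc p) = Some a\<close> Some
        by auto
      moreover have "1 \<le> a" "1 \<le> b"
        using is_morphismD(1)[OF f, of "Suc p" a] is_morphismD(1)[OF f, of "Suc q" b]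
          pq len_z \<open>\<alpha> (Suc p) = Some a\<close> Some by auto
      ultimately have "a - 1 \<noteq> b - 1"
        by simp
      have za: "?z ! p = prefix_mode ?ts (a - 1)" "a - 1 < length ?ts"
        using mapped[of p a] pq(1) len_z \<open>\<alpha> (Suc p) = Some a\<close> by simp_all
      have zb: "?z ! q = prefix_mode ?ts (b - 1)" "b - 1 < length ?ts"
        using mapped[of q b] pq(2) len_z Some by simp_all
      have "\<forall>t\<in>set ?ts. 0 < t"
        using T unfolding pos_tuple_def .
      from prefix_mode_divides[OF this za(2) zb(2) \<open>a - 1 \<noteq> b - 1\<close>] le
      show ?thesis
        unfolding za(1) zb(1) by blast
    qed
  qed
  then have "successively mode_divides (sort_key prod.swap ?z)"
    by (rule successively_sort_key)
  then show ?thesis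
    unfolding tractable_iff_successively flat_snd_encoded_layout
    by (simp add: encoded_layout_conv_fill)
qed

(* acc is the product of the entries emitted so far, i.e. the stride that the next emitted
   entry would encode; the quotient d div acc lifts it to d. *)
fun realizer :: "nat \<Rightarrow> (nat \<times> nat) list \<Rightarrow> nat list" where
  "realizer acc [] = []"
| "realizer acc ((s, d) # ms) =
     (if d = 0 then 1 # 1 # realizer acc ms else d div acc # s # realizer (d * s) ms)"

lemma length_realizer [simp]: "length (realizer acc ms) = 2 * length ms"
  by (induction acc ms rule: realizer.induct) auto

lemma realizer_correct:
  assumes "\<forall>m\<in>set ms. 0 < fst m" and "sorted (map snd ms)" and "successively mode_divides ms"
    and "0 < acc" and "ms \<noteq> [] \<Longrightarrow> acc dvd snd (hd ms) \<and> (snd (hd ms) = 0 \<longrightarrow> acc = 1)"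
  shows "(\<forall>t\<in>set (realizer acc ms). 0 < t) \<and>
    (\<forall>k<length ms. snd (ms ! k) \<noteq> 0 \<longrightarrow>
       realizer acc ms ! Suc (2 * k) = fst (ms ! k) \<and>
       acc * prod_list (take (Suc (2 * k)) (realizer acc ms)) = snd (ms ! k))"
  using assms
proof (induction ms arbitrary: acc)
  case Nil
  then show ?case by simp
next
  case (Cons m ms)
  obtain s d where m: "m = (s, d)"
    by fastforce
  define acc' where "acc' = (if d = 0 then acc else d * s)"
  have s: "0 < s"
    using Cons.prems(1) m by simp
  have d: "d \<noteq> 0 \<Longrightarrow> acc dvd d"
    using Cons.prems(5) m by simp
  have realizer_Cons: "realizer acc (m # ms) =
      (if d = 0 then 1 else d div acc) # (if d = 0 then 1 else s) # realizer acc' ms"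
    by (simp add: m acc'_def)
  have acc': "acc * (if d = 0 then 1 else d div acc) * (if d = 0 then 1 else s) = acc'"
    using d by (simp add: acc'_def)
  have "ms \<noteq> [] \<Longrightarrow> acc' dvd snd (hd ms) \<and> (snd (hd ms) = 0 \<longrightarrow> acc' = 1)"
    using Cons.prems(2,3,5) m by (cases ms) (auto simp: acc'_def mode_divides_def mult.commute)
  moreover have "0 < acc'"
    using Cons.prems(4) s by (simp add: acc'_def)
  moreover have "successively mode_divides ms"
    using Cons.prems(3) by (cases ms) auto
  ultimately have IH: "(\<forall>t\<in>set (realizer acc' ms). 0 < t) \<and>
    (\<forall>k<length ms. snd (ms ! k) \<noteq> 0 \<longrightarrow>
       realizer acc' ms ! Suc (2 * k) = fst (ms ! k) \<and>
       acc' * prod_list (take (Suc (2 * k)) (realizer acc' ms)) = snd (ms ! k))"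
    using Cons.IH[of acc'] Cons.prems(1,2) by simp
  have "0 < d div acc" if "d \<noteq> 0"
    using d[OF that] that Cons.prems(4) by (auto elim!: dvdE)
  then have "\<forall>t\<in>set (realizer acc (m # ms)). 0 < t"
    using IH s by (simp add: realizer_Cons)
  moreover have "realizer acc (m # ms) ! Suc (2 * k) = fst ((m # ms) ! k) \<and>
      acc * prod_list (take (Suc (2 * k)) (realizer acc (m # ms))) = snd ((m # ms) ! k)"
    if "k < length (m # ms)" "snd ((m # ms) ! k) \<noteq> 0" for k
  proof (cases k)
    case 0
    then show ?thesis using that d by (simp add: realizer_Cons m)
  next
    case (Suc k')
    then show ?thesis
      using that IH by (simp add: realizer_Cons flip: acc' mult.assoc)
  qed
  ultimately show ?case by blast
qed

lemma sorted_snd_sort_key_swap: "sorted (map snd (sort_key prod.swap zs))"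
proof -
  have "sorted_wrt (\<lambda>x y. prod.swap x \<le> prod.swap y) (sort_key prod.swap zs)"
    using sorted_sort_key[of prod.swap zs] by (simp add: sorted_map)
  then show ?thesis
    unfolding sorted_map by (rule sorted_wrt_mono_rel[rotated]) (auto simp: less_eq_prod_def)
qed

lemma successively_mode_divides_realizable:
  assumes pos: "\<forall>m\<in>set zs. 0 < fst m" and tr: "successively mode_divides (sort_key prod.swap zs)"
  obtains ts g where "\<forall>t\<in>set ts. 0 < t" and "inj_on g {..<length zs}"
    and "\<And>p. p < length zs \<Longrightarrow> g p < length ts"
    and "\<And>p. p < length zs \<Longrightarrow> snd (zs ! p) \<noteq> 0 \<Longrightarrow> prefix_mode ts (g p) = zs ! p"
proof -
  let ?ms = "sort_key prod.swap zs"
  let ?ts = "realizer 1 ?ms"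
  obtain f where f: "bij_betw f {..<length zs} {..<length ?ms}"
    and zs_ms: "\<And>p. p < length zs \<Longrightarrow> zs ! p = ?ms ! f p"
    using permutation_Ex_bij[of zs ?ms] by auto
  have ms_pos: "\<forall>m\<in>set ?ms. 0 < fst m"
    using pos by simp
  have "(\<forall>t\<in>set ?ts. 0 < t) \<and>
    (\<forall>k<length ?ms. snd (?ms ! k) \<noteq> 0 \<longrightarrow>
       ?ts ! Suc (2 * k) = fst (?ms ! k) \<and> prod_list (take (Suc (2 * k)) ?ts) = snd (?ms ! k))"
    using realizer_correct[where acc = 1, OF ms_pos sorted_snd_sort_key_swap tr] by simp
  moreover have f_less: "f p < length ?ms" if "p < length zs" for p
    using f that by (auto simp: bij_betw_def)
  ultimately show thesis
  proof (intro that[of ?ts "\<lambda>p. Suc (2 * f p)"])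
    show "inj_on (\<lambda>p. Suc (2 * f p)) {..<length zs}"
      using f by (auto simp: bij_betw_def inj_on_def)
    show "Suc (2 * f p) < length ?ts" if "p < length zs" for p
      using f_less[OF that] by simp
  qed (auto simp: prefix_mode_def zs_ms prod_eq_iff)
qed

lemma flat_Node_map_Leaf: "flat (Node (map Leaf ts)) = ts"
  by (induction ts) auto

lemma length_flat_shape: "length (flat (shape X)) = length (flat X)"
  by (induction X) (simp_all add: length_concat comp_def cong: map_cong)

lemma congruent_len_eq: "congruent X Y \<Longrightarrow> len X = len Y"
  unfolding congruent_def len_def by (metis length_flat_shape)

lemma encoded_layout_if_tractable:
  assumes L: "is_layout (S, D)" and tr: "tractable (S, D)"
  shows "\<exists>T \<alpha>. pos_tuple T \<and> is_morphism S T \<alpha> \<and> encoded_layout S T \<alpha> = (S, D)"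
proof -
  let ?zs = "zip (flat S) (flat D)"
  have congr: "congruent S D" and len_D: "length (flat D) = len S"
    using L congruent_len_eq[of S D] by (simp_all add: is_layout_def len_def)
  have len_zs: "length ?zs = len S"
    using len_D by (simp add: len_def)
  have "\<forall>m\<in>set ?zs. 0 < fst m"
    using L by (auto simp: is_layout_def pos_tuple_def dest: set_zip_leftD)
  moreover have "successively mode_divides (sort_key prod.swap ?zs)"
    using tr by (simp add: tractable_iff_successively)
  ultimately obtain ts g where ts: "\<forall>t\<in>set ts. 0 < t" and g_inj: "inj_on g {..<len S}"
    and g_less: "\<And>p. p < len S \<Longrightarrow> g p < length ts"
    and g_mode: "\<And>p. p < len S \<Longrightarrow> flat D ! p \<noteq> 0 \<Longrightarrow>
      ts ! g p = flat S ! p \<and> prod_list (take (g p) ts) = flat D ! p"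
    using successively_mode_divides_realizable[of ?zs] len_zs len_D
    by (auto simp: prefix_mode_def len_def)
  define T where "T = Node (map Leaf ts)"
  define \<alpha> where "\<alpha> i =
    (if 1 \<le> i \<and> i \<le> len S \<and> flat D ! (i - 1) \<noteq> 0 then Some (Suc (g (i - 1))) else None)" for i
  have flat_T: "flat T = ts"
    unfolding T_def by (rule flat_Node_map_Leaf)
  have "pos_tuple T"
    using ts by (simp add: flat_T pos_tuple_def)
  moreover have "is_morphism S T \<alpha>"
    unfolding is_morphism_def
  proof (intro conjI ballI allI impI)
    fix i j assume i: "i \<in> {1..len S}" and "\<alpha> i = Some j"
    then have "j = Suc (g (i - 1))" "flat D ! (i - 1) \<noteq> 0"
      by (auto simp: \<alpha>_def split: if_splits)
    moreover have "i - 1 < len S"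
      using i by auto
    ultimately show "j \<in> {1..len T}" "entry i S = entry j T"
      using g_less[of "i - 1"] g_mode[of "i - 1"] by (auto simp: flat_T len_def entry_def)
  next
    fix i i' assume i: "i \<in> {1..len S}" and i': "i' \<in> {1..len S}"
      and "\<alpha> i \<noteq> None \<and> \<alpha> i = \<alpha> i'"
    then have "g (i - 1) = g (i' - 1)"
      by (auto simp: \<alpha>_def split: if_splits)
    with g_inj i i' have "i - 1 = i' - 1"
      by (auto dest: inj_onD)
    then show "i = i'"
      using i i' by auto
  qed
  moreover have "flat D = encoded_strides (flat T) \<alpha> (len S)"
    by (rule nth_equalityI) (auto simp: len_D \<alpha>_def flat_T g_mode)
  then have "encoded_layout S T \<alpha> = (S, D)"
    by (rule encoded_layout_eqI[OF congr])
  ultimately show ?thesis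
    by blast
qed

theorem mainTheorem9:
  fixes L :: layout
  assumes "is_layout L"
  shows "(\<exists>T \<alpha>. pos_tuple T \<and> is_morphism (fst L) T \<alpha> \<and> encoded_layout (fst L) T \<alpha> = L)
         \<longleftrightarrow> tractable L"
proof
  assume "\<exists>T \<alpha>. pos_tuple T \<and> is_morphism (fst L) T \<alpha> \<and> encoded_layout (fst L) T \<alpha> = L"
  then show "tractable L"
    using tractable_encoded_layout by metis
next
  assume "tractable L"
  then show "\<exists>T \<alpha>. pos_tuple T \<and> is_morphism (fst L) T \<alpha> \<and> encoded_layout (fst L) T \<alpha> = L"
    using encoded_layout_if_tractable[of "fst L" "snd L"] assms by simp
qed

end
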